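(* Let $0<\delta_0\le 1/253$ and $\lambda,\mu,R>0$. Assume Condition (C3), $\mu^2\le \delta_0R^2/(2J^2(g^0))$ (vacuous if $J(g^0)=0$), and $$\frac{4\lambda^2 s_0}{\Lambda_{\tilde X,\min}^2}\le \delta_0R^2.$$ Suppose the realized data $(X,Z,E)$ lie in $\mathcal T(\delta_0,R)$, i.e. $$\sup_{f\in\mathcal F(R)}\big|\|f\|_n^2-\|f\|^2\big|\le\delta_0R^2\quad\text{and}\quad \sup_{f\in\mathcal F(R)}\big|E^Tf(X,Z)\big|/n\le \delta_0R^2.$$ Then every minimizer $(\hat\beta,\hat g)$ of the doubly penalised least squares criterion satisfies $\tau(\hat f-f^0)\le R$.
   Context: Setting. Let $(x,z)$ be a random vector with $x\in\mathbb R^p$ (a row vector) and $z\in\mathbb R^d$, joint distribution $Q$ and marginal $Q_z$ of $z$; let $(x_i,z_i)$, $i=1,\dots,n$, be i.i.d. copies of $(x,z)$, and let $X$ be the $n\times p$ matrix with rows $x_i$. Let $\mathcal G$ be a linear subspace of $L_2(Q_z)$ equipped with a semi-inner product $J(\cdot,\cdot)$ with associated seminorm $J(\cdot)$. Fix $\beta^0\in\mathbb R^p$, $g^0\in\mathcal G$; $S_0=\{j:\beta^0_j\neq 0\}$, $s_0=|S_0|$. The responses are $Y=X\beta^0+g^0(Z)+E\in\mathbb R^n$, where $g(Z)=(g(z_1),\dots,g(z_n))^T$ and $E=(e_1,\dots,e_n)^T$. For a function $f$ of $(x,z)$: $\|f\|^2=\mathbb E f(x,z)^2$, $\|f\|_n^2=\frac1n\sum_{i=1}^n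 f(x_i,z_i)^2$. For $\beta\in\mathbb R^p$, $g\in\mathcal G$, write $f=X\beta+g$ for the function $(x,z)\mapsto x\beta+g(z)$ (and also for the vector $f(X,Z)=X\beta+g(Z)$); $f^0=X\beta^0+g^0$. Let $h(z)=\mathbb E[x\mid z]$, $\tilde x=x-h(z)$; $\Lambda_{\tilde X,\min}^2$ is the smallest eigenvalue of $\mathbb E[\tilde x^T\tilde x]$ and $\Lambda_{h,\max}^2$ the largest eigenvalue of $\mathbb E[h(z)^Th(z)]$. Condition (C3): $\Lambda_{\tilde X,\min}>0$ and $\Lambda_{h,\max}<\infty$. Estimator: $(\hat\beta,\hat g)$ minimizes over $\mathbb R^p\times\mathcal G$ the criterion $\|Y-X\beta-g(Z)\|_n^2+\lambda\|\beta\|_1+\mu^2J^2(g)$, where $\|v\|_n^2=v^Tv/n$; $\hat f=X\hat\beta+\hat g$. For a pair $(\beta,g)$ with $f=X\beta+g$: $\tau(f)=\frac{\lambda\|\beta\|_1}{R\sqrt{\delta_0/2}}+\sqrt{\|X\beta+g\|^2+\mu^2J^2(g)}$ (with $\hat f-f^0$ corresponding to $(\hat\beta-\beta^0,\hat g-g^0)$), and $\mathcal F(R)$ is the set of all $f=X\beta+g$, $\beta\in\mathbb R^p$, $g\in\mathcal G$, with $\tau(f)\le R$. *)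

theory Defs
  imports "HOL-Probability.Probability"
begin

(* Q: joint law of (x,z) on R^p x R^d; x = fst, z = snd. *)

text \<open>Linear subspace of functions z |-> g z (elements of L2(Q_z), represented by functions).\<close>
definition lin_subspace :: "('d \<Rightarrow> real) set \<Rightarrow> bool" where
  "lin_subspace G \<longleftrightarrow> (\<lambda>_. 0) \<in> G \<and> (\<forall>g\<in>G. \<forall>g'\<in>G. (\<lambda>z. g z + g' z) \<in> G)
     \<and> (\<forall>g\<in>G. \<forall>c::real. (\<lambda>z. c * g z) \<in> G)"

definition subspace_L2 :: "(('a::euclidean_space) \<times> ('b::euclidean_space)) measure \<Rightarrow> ('b \<Rightarrow> real) set \<Rightarrow> bool" where
  "subspace_L2 Q G \<longleftrightarrow> lin_subspace G \<and>
     (\<forall>g\<in>G. g \<in> borel_measurable borel \<and> integrable Q (\<lambda>\<omega>. (g (snd \<omega>))\<^sup>2))"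

definition semi_inner :: "('d \<Rightarrow> real) set \<Rightarrow> (('d \<Rightarrow> real) \<Rightarrow> ('d \<Rightarrow> real) \<Rightarrow> real) \<Rightarrow> bool" where
  "semi_inner G Jip \<longleftrightarrow>
     (\<forall>g\<in>G. \<forall>g'\<in>G. Jip g g' = Jip g' g) \<and>
     (\<forall>g\<in>G. \<forall>g'\<in>G. \<forall>k\<in>G. Jip (\<lambda>z. g z + g' z) k = Jip g k + Jip g' k) \<and>
     (\<forall>g\<in>G. \<forall>k\<in>G. \<forall>c::real. Jip (\<lambda>z. c * g z) k = c * Jip g k) \<and>
     (\<forall>g\<in>G. Jip g g \<ge> 0)"

definition Jsq :: "(('d \<Rightarrow> real) \<Rightarrow> ('d \<Rightarrow> real) \<Rightarrow> real) \<Rightarrow> ('d \<Rightarrow> real) \<Rightarrow> real" where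
  "Jsq Jip g = Jip g g"

text \<open>h_j(z) = E[x_j | z], as a sigma(z)-measurable function of (x,z).\<close>
definition hcomp :: "((real^'p) \<times> (real^'d)) measure \<Rightarrow> 'p \<Rightarrow> ((real^'p) \<times> (real^'d)) \<Rightarrow> real" where
  "hcomp Q j = real_cond_exp Q (vimage_algebra (space Q) snd borel) (\<lambda>\<omega>. fst \<omega> $ j)"

definition xtil :: "((real^'p) \<times> (real^'d)) measure \<Rightarrow> 'p \<Rightarrow> ((real^'p) \<times> (real^'d)) \<Rightarrow> real" where
  "xtil Q j \<omega> = fst \<omega> $ j - hcomp Q j \<omega>"

definition Sigma_til :: "((real^'p) \<times> (real^'d)) measure \<Rightarrow> real^'p^'p" where
  "Sigma_til Q = (\<chi> j k. \<integral>\<omega>. xtil Q j \<omega> * xtil Q k \<omega> \<partial>Q)"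

definition min_eigenvalue :: "real^'n^'n \<Rightarrow> real" where
  "min_eigenvalue A = Min {c. \<exists>v. v \<noteq> 0 \<and> A *v v = c *\<^sub>R v}"

definition l1norm :: "real^'p \<Rightarrow> real" where
  "l1norm b = (\<Sum>j\<in>UNIV. \<bar>b $ j\<bar>)"

definition pop_sq :: "((real^'p) \<times> (real^'d)) measure \<Rightarrow> real^'p \<Rightarrow> (real^'d \<Rightarrow> real) \<Rightarrow> real" where
  "pop_sq Q b g = (\<integral>\<omega>. (fst \<omega> \<bullet> b + g (snd \<omega>))\<^sup>2 \<partial>Q)"

definition emp_sq :: "nat \<Rightarrow> (nat \<Rightarrow> real^'p) \<Rightarrow> (nat \<Rightarrow> real^'d) \<Rightarrow> real^'p \<Rightarrow> (real^'d \<Rightarrow> real) \<Rightarrow> real" where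
  "emp_sq n xs zs b g = (\<Sum>i<n. (xs i \<bullet> b + g (zs i))\<^sup>2) / real n"

definition tau :: "((real^'p) \<times> (real^'d)) measure \<Rightarrow> ((real^'d \<Rightarrow> real) \<Rightarrow> (real^'d \<Rightarrow> real) \<Rightarrow> real) \<Rightarrow>
    real \<Rightarrow> real \<Rightarrow> real \<Rightarrow> real \<Rightarrow> real^'p \<Rightarrow> (real^'d \<Rightarrow> real) \<Rightarrow> real" where
  "tau Q Jip lam mu R \<delta>0 b g =
     lam * l1norm b / (R * sqrt (\<delta>0 / 2)) + sqrt (pop_sq Q b g + mu\<^sup>2 * Jsq Jip g)"

definition crit :: "nat \<Rightarrow> (nat \<Rightarrow> real^'p) \<Rightarrow> (nat \<Rightarrow> real^'d) \<Rightarrow> (nat \<Rightarrow> real) \<Rightarrow>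
    ((real^'d \<Rightarrow> real) \<Rightarrow> (real^'d \<Rightarrow> real) \<Rightarrow> real) \<Rightarrow> real \<Rightarrow> real \<Rightarrow> real^'p \<Rightarrow> (real^'d \<Rightarrow> real) \<Rightarrow> real" where
  "crit n xs zs Y Jip lam mu b g =
     (\<Sum>i<n. (Y i - xs i \<bullet> b - g (zs i))\<^sup>2) / real n + lam * l1norm b + mu\<^sup>2 * Jsq Jip g"

end

theory Submission imports Defs begin

text \<open>Suppose \<open>\<tau>(f\<^sup>^ - f\<^sup>0) > R\<close> and shrink \<open>f\<^sup>^ - f\<^sup>0\<close> towards \<open>0\<close> by the factor
  \<open>t = R / \<tau>(f\<^sup>^ - f\<^sup>0)\<close>, which lands on the boundary of \<open>\<F>(R)\<close>. Since the criterion is convex,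
  the shrunken difference \<open>f = X\<beta> + g\<close> still satisfies the basic inequality
  \<open>\<parallel>f\<parallel>\<^sub>n\<^sup>2 + \<lambda>\<parallel>\<beta>\<^sup>0 + \<beta>\<parallel>\<^sub>1 + \<mu>\<^sup>2J\<^sup>2(g\<^sup>0 + g) \<le> 2E\<^sup>Tf/n + \<lambda>\<parallel>\<beta>\<^sup>0\<parallel>\<^sub>1 + \<mu>\<^sup>2J\<^sup>2(g\<^sup>0)\<close>.
  On \<open>\<T>(\<delta>\<^sub>0, R)\<close> the empirical terms are within \<open>\<delta>\<^sub>0R\<^sup>2\<close> of their population
  counterparts, and because \<open>x - E[x|z]\<close> is orthogonal to every function of \<open>z\<close>, the
  population norm dominates \<open>\<Lambda>\<^sup>2 \<parallel>\<beta>\<parallel>\<^sub>2\<^sup>2\<close> with \<open>\<Lambda>\<^sup>2\<close> the smallest eigenvalue of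
  \<open>E[(x - E[x|z])\<^sup>T(x - E[x|z])]\<close>; this pays for the part of the \<open>\<ell>\<^sub>1\<close> penalty lost on \<open>S\<^sub>0\<close>.
  Altogether \<open>\<tau>(f) \<le> 12 \<surd>\<delta>\<^sub>0 R < R\<close>, contradicting \<open>\<tau>(f) = R\<close>.\<close>

section \<open>Symmetric matrices\<close>

lemma symmetric_matrix_inner_commute:
  fixes A :: "real^'n^'n"
  assumes "transpose A = A"
  shows "(A *v x) \<bullet> y = x \<bullet> (A *v y)"
proof -
  have "A *v x = x v* A" using vector_transpose_matrix[of x A] assms by simp
  then show ?thesis by (simp add: dot_lmul_matrix)
qed

lemma finite_eigenvalues_symmetric:
  fixes A :: "real^'n^'n"
  assumes sym: "transpose A = A"
  shows "finite {c. \<exists>v. v \<noteq> 0 \<and> A *v v = c *\<^sub>R v}"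
proof -
  define S where "S = {c. \<exists>v. v \<noteq> 0 \<and> A *v v = c *\<^sub>R v}"
  define ev where "ev c = (SOME v. v \<noteq> 0 \<and> A *v v = c *\<^sub>R v)" for c
  have ev: "ev c \<noteq> 0 \<and> A *v ev c = c *\<^sub>R ev c" if "c \<in> S" for c
    using someI_ex[of "\<lambda>v. v \<noteq> 0 \<and> A *v v = c *\<^sub>R v"] that unfolding S_def ev_def by blast
  have orth: "ev c \<bullet> ev d = 0" if "c \<in> S" "d \<in> S" "c \<noteq> d" for c d
  proof -
    have "c * (ev c \<bullet> ev d) = (A *v ev c) \<bullet> ev d" using ev[OF that(1)] by simp
    also have "\<dots> = ev c \<bullet> (A *v ev d)" by (rule symmetric_matrix_inner_commute[OF sym])
    also have "\<dots> = d * (ev c \<bullet> ev d)" using ev[OF that(2)] by simp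
    finally show ?thesis using that(3) by simp
  qed
  have "inj_on ev S"
    by (rule inj_onI) (metis orth ev inner_eq_zero_iff)
  moreover have "independent (ev ` S)"
    using orth ev by (intro pairwise_orthogonal_independent) (auto simp: pairwise_def orthogonal_def)
  then have "finite (ev ` S)" using independent_bound by blast
  ultimately show ?thesis using finite_imageD unfolding S_def by blast
qed

lemma quadratic_nonneg_imp_linear_coeff_zero:
  fixes a c :: real
  assumes nonneg: "\<And>s. 0 \<le> s * a + s\<^sup>2 * c"
  shows "a = 0"
proof (rule ccontr)
  assume "a \<noteq> 0"
  define k where "k = \<bar>c\<bar> + 1"
  have "k > 0" unfolding k_def by simp
  have "(- a / k) * a + (- a / k)\<^sup>2 * c = a\<^sup>2 * (c - k) / k\<^sup>2"
    using \<open>k > 0\<close> by (simp add: field_simps power2_eq_square)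
  also have "\<dots> < 0"
    using \<open>a \<noteq> 0\<close> \<open>k > 0\<close> unfolding k_def by (intro divide_neg_pos mult_pos_neg) auto
  finally show False using nonneg[of "- a / k"] by linarith
qed

text \<open>The first variation of the Rayleigh quotient along the residual \<open>r = A v\<^sub>0 - m v\<^sub>0\<close>
  is \<open>2 s \<parallel>r\<parallel>\<^sup>2\<close>, which must vanish at a minimiser.\<close>

lemma Rayleigh_minimiser_is_eigenvector:
  fixes A :: "real^'n^'n"
  assumes sym: "transpose A = A" and unit: "v0 \<bullet> v0 = 1"
    and min: "\<And>w. (v0 \<bullet> (A *v v0)) * (w \<bullet> w) \<le> w \<bullet> (A *v w)"
  shows "A *v v0 = (v0 \<bullet> (A *v v0)) *\<^sub>R v0"
proof -
  define q where "q w = w \<bullet> (A *v w)" for w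
  define m where "m = q v0"
  define r where "r = A *v v0 - m *\<^sub>R v0"
  have "0 \<le> s * (2 * (r \<bullet> r)) + s\<^sup>2 * (q r - m * (r \<bullet> r))" for s
  proof -
    define a where "a = r \<bullet> (A *v v0)"
    define b where "b = r \<bullet> v0"
    define rr where "rr = r \<bullet> r"
    have "(A *v r) \<bullet> v0 = a" unfolding a_def by (rule symmetric_matrix_inner_commute[OF sym])
    then have Q: "q (v0 + s *\<^sub>R r) = m + 2 * s * a + s\<^sup>2 * q r"
      unfolding q_def m_def a_def
      by (simp add: matrix_vector_right_distrib matrix_vector_mult_scaleR inner_add_left
          inner_add_right power2_eq_square algebra_simps inner_commute)
    have N: "(v0 + s *\<^sub>R r) \<bullet> (v0 + s *\<^sub>R r) = 1 + 2 * s * b + s\<^sup>2 * rr"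
      using unit unfolding b_def rr_def
      by (simp add: inner_add_left inner_add_right power2_eq_square algebra_simps inner_commute)
    have rr: "rr = a - m * b"
      unfolding rr_def r_def a_def b_def
      by (simp add: inner_diff_right inner_diff_left inner_commute algebra_simps)
    have "q (v0 + s *\<^sub>R r) - m * ((v0 + s *\<^sub>R r) \<bullet> (v0 + s *\<^sub>R r))
        = s * (2 * rr) + s\<^sup>2 * (q r - m * rr)"
      unfolding Q N rr by (simp add: algebra_simps)
    then show ?thesis using min[of "v0 + s *\<^sub>R r"] unfolding q_def m_def rr_def by linarith
  qed
  then have "2 * (r \<bullet> r) = 0" by (rule quadratic_nonneg_imp_linear_coeff_zero)
  then show ?thesis unfolding r_def m_def q_def by simp
qed

lemma min_eigenvalue_le_quadratic_form:
  fixes A :: "real^'n^'n"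
  assumes sym: "transpose A = A"
  shows "min_eigenvalue A * (v \<bullet> v) \<le> v \<bullet> (A *v v)"
proof -
  define q where "q w = w \<bullet> (A *v w)" for w :: "real^'n"
  have "continuous_on (sphere 0 1) q"
    unfolding q_def by (intro continuous_intros linear_continuous_on matrix_vector_mul_linear)
  moreover have "sphere (0::real^'n) 1 \<noteq> {}" by simp
  ultimately obtain v0 where v0: "v0 \<in> sphere 0 1" and v0_min: "\<And>y. y \<in> sphere 0 1 \<Longrightarrow> q v0 \<le> q y"
    using continuous_attains_inf[OF compact_sphere] by blast
  have unit: "v0 \<bullet> v0 = 1" using v0 by (simp add: dot_square_norm)
  have ray: "q v0 * (w \<bullet> w) \<le> q w" for w
  proof (cases "w = 0")
    case True then show ?thesis by (simp add: q_def)
  next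
    case False
    then have "q v0 \<le> q (inverse (norm w) *\<^sub>R w)" by (intro v0_min) simp
    also have "\<dots> = q w / (norm w)\<^sup>2"
      unfolding q_def by (simp add: matrix_vector_mult_scaleR power2_eq_square divide_inverse)
    finally have "q v0 * (norm w)\<^sup>2 \<le> q w" using False by (simp add: pos_le_divide_eq)
    then show ?thesis by (simp add: dot_square_norm)
  qed
  have "A *v v0 = q v0 *\<^sub>R v0"
    using Rayleigh_minimiser_is_eigenvector[OF sym unit] ray unfolding q_def by blast
  moreover have "v0 \<noteq> 0" using unit by auto
  ultimately have "min_eigenvalue A \<le> q v0"
    unfolding min_eigenvalue_def using finite_eigenvalues_symmetric[OF sym] by (auto intro: Min_le)
  then have "min_eigenvalue A * (v \<bullet> v) \<le> q v0 * (v \<bullet> v)" by (simp add: mult_right_mono)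
  also have "\<dots> \<le> q v" by (rule ray)
  finally show ?thesis unfolding q_def .
qed

section \<open>Square integrable functions\<close>

definition square_integrable :: "'a measure \<Rightarrow> ('a \<Rightarrow> real) \<Rightarrow> bool" where
  "square_integrable M u \<longleftrightarrow> u \<in> borel_measurable M \<and> integrable M (\<lambda>w. (u w)\<^sup>2)"

lemma integrable_mult_square_integrable:
  assumes "square_integrable M u" "square_integrable M v"
  shows "integrable M (\<lambda>w. u w * v w)"
proof (rule Bochner_Integration.integrable_bound)
  show "integrable M (\<lambda>w. (u w)\<^sup>2 + (v w)\<^sup>2)" "(\<lambda>w. u w * v w) \<in> borel_measurable M"
    using assms unfolding square_integrable_def by auto
  have "\<bar>u w\<bar> * \<bar>v w\<bar> \<le> \<bar>u w\<bar>\<^sup>2 + \<bar>v w\<bar>\<^sup>2" for w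
    using sum_squares_bound[of "\<bar>u w\<bar>" "\<bar>v w\<bar>"] zero_le_mult_iff[of "\<bar>u w\<bar>" "\<bar>v w\<bar>"] by linarith
  then show "AE w in M. norm (u w * v w) \<le> norm ((u w)\<^sup>2 + (v w)\<^sup>2)"
    by (simp add: abs_mult)
qed

lemma square_integrable_add:
  assumes "square_integrable M u" "square_integrable M v"
  shows "square_integrable M (\<lambda>w. u w + v w)"
proof -
  have "integrable M (\<lambda>w. (u w)\<^sup>2 + 2 * (u w * v w) + (v w)\<^sup>2)"
    using assms integrable_mult_square_integrable[OF assms] unfolding square_integrable_def by auto
  then show ?thesis
    using assms unfolding square_integrable_def by (simp add: power2_sum algebra_simps borel_measurable_add)
qed

lemma square_integrable_mult_const: "square_integrable M u \<Longrightarrow> square_integrable M (\<lambda>w. u w * c)"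
  unfolding square_integrable_def by (auto simp: power_mult_distrib intro: borel_measurable_times)

lemma square_integrable_sum:
  "(\<And>j. j \<in> A \<Longrightarrow> square_integrable M (u j)) \<Longrightarrow> square_integrable M (\<lambda>w. \<Sum>j\<in>A. u j w)"
proof (induction A rule: infinite_finite_induct)
  case (insert x F) then show ?case by (simp add: square_integrable_add)
qed (simp_all add: square_integrable_def)

section \<open>The population norm and the residual design\<close>

context
  fixes Q :: "((real^'p) \<times> (real^'d)) measure"
  assumes finite_Q: "finite_measure Q" and sets_Q: "sets Q = sets borel"
begin

abbreviation z_algebra :: "((real^'p) \<times> (real^'d)) measure" where
  "z_algebra \<equiv> vimage_algebra (space Q) snd borel"

lemma measurable_snd_z_algebra: "snd \<in> measurable z_algebra borel"
  by (rule measurable_vimage_algebra1) simp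

lemma measurable_snd_Q: "snd \<in> measurable Q borel"
  unfolding measurable_cong_sets[OF sets_Q refl] by (intro borel_measurable_continuous_onI continuous_intros)

lemma measurable_fst_component: "(\<lambda>\<omega>. fst \<omega> $ j) \<in> borel_measurable Q"
  unfolding measurable_cong_sets[OF sets_Q refl] by (intro borel_measurable_continuous_onI continuous_intros)

lemma finite_measure_subalgebra_z_algebra: "finite_measure_subalgebra Q z_algebra"
proof -
  have "subalgebra Q z_algebra"
    unfolding subalgebra_def sets_vimage_algebra2[of snd "space Q" borel, simplified]
    using measurable_sets[OF measurable_snd_Q] by auto
  then show ?thesis
    using finite_Q by (simp add: finite_measure_subalgebra_def finite_measure_subalgebra_axioms_def)
qed

lemma square_integrable_hcomp:
  "integrable Q (\<lambda>\<omega>. (hcomp Q j \<omega>)\<^sup>2) \<Longrightarrow> square_integrable Q (hcomp Q j)"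
  unfolding square_integrable_def hcomp_def by (simp add: borel_measurable_cond_exp2)

lemma square_integrable_xtil:
  "integrable Q (\<lambda>\<omega>. (xtil Q j \<omega>)\<^sup>2) \<Longrightarrow> square_integrable Q (xtil Q j)"
  unfolding square_integrable_def xtil_def hcomp_def
  by (simp add: borel_measurable_cond_exp2 measurable_fst_component borel_measurable_diff)

lemma integral_xtil_mult_eq_0:
  assumes c_z: "c \<in> borel_measurable z_algebra" and c_L2: "square_integrable Q c"
    and xtil_L2: "square_integrable Q (xtil Q j)" and h_L2: "square_integrable Q (hcomp Q j)"
  shows "(\<integral>\<omega>. xtil Q j \<omega> * c \<omega> \<partial>Q) = 0"
proof -
  interpret finite_measure_subalgebra Q z_algebra by (rule finite_measure_subalgebra_z_algebra)
  have x_L2: "square_integrable Q (\<lambda>\<omega>. fst \<omega> $ j)"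
    using square_integrable_add[OF xtil_L2 h_L2] by (simp add: xtil_def)
  have int_x: "integrable Q (\<lambda>\<omega>. c \<omega> * fst \<omega> $ j)"
    by (rule integrable_mult_square_integrable[OF c_L2 x_L2])
  have int_h: "integrable Q (\<lambda>\<omega>. c \<omega> * hcomp Q j \<omega>)"
    by (rule integrable_mult_square_integrable[OF c_L2 h_L2])
  have "(\<integral>\<omega>. c \<omega> * hcomp Q j \<omega> \<partial>Q) = (\<integral>\<omega>. c \<omega> * fst \<omega> $ j \<partial>Q)"
    unfolding hcomp_def by (rule real_cond_exp_intg(2)[OF int_x c_z measurable_fst_component])
  then show ?thesis
    using int_x int_h by (simp add: xtil_def algebra_simps)
qed

lemma integral_xtil_combination_square:
  assumes "\<And>j. square_integrable Q (xtil Q j)"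
  shows "(\<integral>\<omega>. (\<Sum>j\<in>UNIV. xtil Q j \<omega> * b $ j)\<^sup>2 \<partial>Q) = b \<bullet> (Sigma_til Q *v b)"
proof -
  have "(\<integral>\<omega>. (\<Sum>j\<in>UNIV. xtil Q j \<omega> * b $ j)\<^sup>2 \<partial>Q)
      = (\<integral>\<omega>. (\<Sum>j\<in>UNIV. \<Sum>k\<in>UNIV. (b $ j * b $ k) * (xtil Q j \<omega> * xtil Q k \<omega>)) \<partial>Q)"
    by (simp add: power2_eq_square sum_product algebra_simps)
  also have "\<dots> = (\<Sum>j\<in>UNIV. \<Sum>k\<in>UNIV. (b $ j * b $ k) * (\<integral>\<omega>. xtil Q j \<omega> * xtil Q k \<omega> \<partial>Q))"
    using integrable_mult_square_integrable[OF assms assms] by (simp add: integral_sum)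
  also have "\<dots> = b \<bullet> (Sigma_til Q *v b)"
    unfolding inner_vec_def matrix_vector_mult_def Sigma_til_def
    by (simp add: sum_distrib_left algebra_simps)
  finally show ?thesis .
qed

lemma quadratic_form_Sigma_til_le_pop_sq:
  assumes g_meas: "g \<in> borel_measurable borel" and g_L2: "integrable Q (\<lambda>\<omega>. (g (snd \<omega>))\<^sup>2)"
    and xtil_L2: "\<And>j. integrable Q (\<lambda>\<omega>. (xtil Q j \<omega>)\<^sup>2)"
    and h_L2: "\<And>j. integrable Q (\<lambda>\<omega>. (hcomp Q j \<omega>)\<^sup>2)"
  shows "b \<bullet> (Sigma_til Q *v b) \<le> pop_sq Q b g"
proof -
  define a where "a \<omega> = (\<Sum>j\<in>UNIV. xtil Q j \<omega> * b $ j)" for \<omega>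
  define c where "c \<omega> = (\<Sum>j\<in>UNIV. hcomp Q j \<omega> * b $ j) + g (snd \<omega>)" for \<omega>
  have gz: "(\<lambda>\<omega>. g (snd \<omega>)) \<in> borel_measurable z_algebra"
    using measurable_compose[OF measurable_snd_z_algebra g_meas] by (simp add: comp_def)
  have "square_integrable Q (\<lambda>\<omega>. g (snd \<omega>))"
    using measurable_compose[OF measurable_snd_Q g_meas] g_L2
    unfolding square_integrable_def by (simp add: comp_def)
  then have c_L2: "square_integrable Q c"
    unfolding c_def using h_L2
    by (intro square_integrable_add square_integrable_sum square_integrable_mult_const square_integrable_hcomp)
  have a_L2: "square_integrable Q a"
    unfolding a_def using xtil_L2 by (intro square_integrable_sum square_integrable_mult_const square_integrable_xtil)
  have c_z: "c \<in> borel_measurable z_algebra"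
    unfolding c_def hcomp_def using gz
    by (intro borel_measurable_add borel_measurable_sum borel_measurable_times borel_measurable_cond_exp) auto
  have "(\<integral>\<omega>. a \<omega> * c \<omega> \<partial>Q) = (\<integral>\<omega>. (\<Sum>j\<in>UNIV. b $ j * (xtil Q j \<omega> * c \<omega>)) \<partial>Q)"
    unfolding a_def by (simp add: sum_distrib_right sum_distrib_left algebra_simps)
  also have "\<dots> = (\<Sum>j\<in>UNIV. b $ j * (\<integral>\<omega>. xtil Q j \<omega> * c \<omega> \<partial>Q))"
    using integrable_mult_square_integrable[OF square_integrable_xtil[OF xtil_L2] c_L2]
    by (simp add: integral_sum)
  also have "\<dots> = 0"
    using integral_xtil_mult_eq_0[OF c_z c_L2 square_integrable_xtil[OF xtil_L2] square_integrable_hcomp[OF h_L2]]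
    by simp
  finally have ac: "(\<integral>\<omega>. a \<omega> * c \<omega> \<partial>Q) = 0" .
  have "fst \<omega> \<bullet> b + g (snd \<omega>) = a \<omega> + c \<omega>" for \<omega>
    unfolding a_def c_def inner_vec_def by (simp add: xtil_def sum_subtractf algebra_simps)
  then have "pop_sq Q b g = (\<integral>\<omega>. (a \<omega>)\<^sup>2 + 2 * (a \<omega> * c \<omega>) + (c \<omega>)\<^sup>2 \<partial>Q)"
    unfolding pop_sq_def by (simp add: power2_sum algebra_simps)
  also have "\<dots> = (\<integral>\<omega>. (a \<omega>)\<^sup>2 \<partial>Q) + (\<integral>\<omega>. (c \<omega>)\<^sup>2 \<partial>Q)"
    using a_L2 c_L2 integrable_mult_square_integrable[OF a_L2 c_L2] ac
    unfolding square_integrable_def by simp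
  finally have "pop_sq Q b g = b \<bullet> (Sigma_til Q *v b) + (\<integral>\<omega>. (c \<omega>)\<^sup>2 \<partial>Q)"
    unfolding a_def integral_xtil_combination_square[OF square_integrable_xtil[OF xtil_L2]] .
  then show ?thesis by simp
qed

lemma min_eigenvalue_Sigma_til_le_pop_sq:
  assumes "g \<in> borel_measurable borel" "integrable Q (\<lambda>\<omega>. (g (snd \<omega>))\<^sup>2)"
    and "\<And>j. integrable Q (\<lambda>\<omega>. (xtil Q j \<omega>)\<^sup>2)" "\<And>j. integrable Q (\<lambda>\<omega>. (hcomp Q j \<omega>)\<^sup>2)"
  shows "min_eigenvalue (Sigma_til Q) * (b \<bullet> b) \<le> pop_sq Q b g"
proof -
  have "transpose (Sigma_til Q) = Sigma_til Q"
    unfolding Sigma_til_def transpose_def by (simp add: mult.commute)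
  then have "min_eigenvalue (Sigma_til Q) * (b \<bullet> b) \<le> b \<bullet> (Sigma_til Q *v b)"
    by (rule min_eigenvalue_le_quadratic_form)
  also have "\<dots> \<le> pop_sq Q b g" using assms by (rule quadratic_form_Sigma_til_le_pop_sq)
  finally show ?thesis .
qed

end

section \<open>Semi-inner products on a function space\<close>

lemma lin_subspace_scaled: "lin_subspace G \<Longrightarrow> d \<in> G \<Longrightarrow> (\<lambda>z. s * d z) \<in> G"
  unfolding lin_subspace_def by blast

lemma lin_subspace_add_scaled:
  assumes "lin_subspace G" "g \<in> G" "d \<in> G"
  shows "(\<lambda>z. g z + s * d z) \<in> G"
proof -
  have "\<forall>g\<in>G. \<forall>g'\<in>G. (\<lambda>z. g z + g' z) \<in> G" using assms(1) unfolding lin_subspace_def by blast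
  then show ?thesis using assms(2) lin_subspace_scaled[OF assms(1,3), of s] by fastforce
qed

lemma lin_subspace_diff:
  assumes "lin_subspace G" "g \<in> G" "d \<in> G"
  shows "(\<lambda>z. g z - d z) \<in> G"
  using lin_subspace_add_scaled[OF assms, of "-1"] by simp

lemma Jsq_nonneg: "semi_inner G Jip \<Longrightarrow> g \<in> G \<Longrightarrow> 0 \<le> Jsq Jip g"
  unfolding semi_inner_def Jsq_def by blast

lemma Jsq_scaled:
  assumes J: "semi_inner G Jip" and G: "lin_subspace G" and d: "d \<in> G"
  shows "Jsq Jip (\<lambda>z. s * d z) = s\<^sup>2 * Jsq Jip d"
proof -
  have sym: "\<And>g g'. g \<in> G \<Longrightarrow> g' \<in> G \<Longrightarrow> Jip g g' = Jip g' g"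
    and hom: "\<And>g k c. g \<in> G \<Longrightarrow> k \<in> G \<Longrightarrow> Jip (\<lambda>z. c * g z) k = c * Jip g k"
    using J unfolding semi_inner_def by auto
  have "(\<lambda>z. s * d z) \<in> G" by (rule lin_subspace_scaled[OF G d])
  then show ?thesis
    unfolding Jsq_def using hom[OF d, of _ s] sym[OF d] hom[OF d d, of s]
    by (simp add: power2_eq_square)
qed

lemma Jsq_add_scaled:
  assumes J: "semi_inner G Jip" and G: "lin_subspace G" and g: "g \<in> G" and d: "d \<in> G"
  shows "Jsq Jip (\<lambda>z. g z + s * d z) = Jsq Jip g + 2 * s * Jip g d + s\<^sup>2 * Jsq Jip d"
proof -
  have sym: "\<And>g g'. g \<in> G \<Longrightarrow> g' \<in> G \<Longrightarrow> Jip g g' = Jip g' g"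
    and add: "\<And>g g' k. g \<in> G \<Longrightarrow> g' \<in> G \<Longrightarrow> k \<in> G \<Longrightarrow> Jip (\<lambda>z. g z + g' z) k = Jip g k + Jip g' k"
    and hom: "\<And>g k c. g \<in> G \<Longrightarrow> k \<in> G \<Longrightarrow> Jip (\<lambda>z. c * g z) k = c * Jip g k"
    using J unfolding semi_inner_def by auto
  define k where "k = (\<lambda>z. s * d z)"
  define h where "h = (\<lambda>z. g z + k z)"
  have kG: "k \<in> G" unfolding k_def by (rule lin_subspace_scaled[OF G d])
  have hG: "h \<in> G" unfolding h_def k_def by (rule lin_subspace_add_scaled[OF G g d])
  have "Jsq Jip (\<lambda>z. g z + s * d z) = Jip g h + Jip k h"
    unfolding Jsq_def using add[OF g kG hG] by (simp add: h_def k_def)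
  also have "Jip g h = Jip g g + Jip k g"
    using sym[OF g hG] add[OF g kG g] by (simp add: h_def)
  also have "Jip k h = Jip k g + Jip k k"
    using sym[OF kG hG] add[OF g kG kG] sym[OF g kG] by (simp add: h_def)
  also have "Jip k g = s * Jip g d" unfolding k_def using hom[OF d g] sym[OF d g] by simp
  also have "Jip k k = s\<^sup>2 * Jsq Jip d" unfolding k_def using Jsq_scaled[OF J G d] by (simp add: Jsq_def)
  finally show ?thesis unfolding Jsq_def by simp
qed

lemma Jsq_segment_convex:
  assumes J: "semi_inner G Jip" and G: "lin_subspace G" and g: "g \<in> G" and d: "d \<in> G"
    and s: "0 \<le> s" "s \<le> 1"
  shows "Jsq Jip (\<lambda>z. g z + s * d z) \<le> (1 - s) * Jsq Jip g + s * Jsq Jip (\<lambda>z. g z + d z)"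
proof -
  have "s * s \<le> s" using s by (simp add: mult_left_le_one_le)
  then have "s\<^sup>2 * Jsq Jip d \<le> s * Jsq Jip d"
    using mult_right_mono Jsq_nonneg[OF J d] unfolding power2_eq_square by blast
  then show ?thesis
    using Jsq_add_scaled[OF J G g d, of s] Jsq_add_scaled[OF J G g d, of 1] by (simp add: algebra_simps)
qed

text \<open>Follows from \<open>0 \<le> J\<^sup>2(g + d/2)\<close>.\<close>

lemma Jsq_add_ge:
  assumes J: "semi_inner G Jip" and G: "lin_subspace G" and g: "g \<in> G" and d: "d \<in> G"
  shows "Jsq Jip d / 2 - 2 * Jsq Jip g \<le> Jsq Jip (\<lambda>z. g z + d z) - Jsq Jip g"
  using Jsq_add_scaled[OF J G g d, of 1] Jsq_add_scaled[OF J G g d, of "1/2"]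
    Jsq_nonneg[OF J lin_subspace_add_scaled[OF G g d, of "1/2"]]
  by (simp add: power2_eq_square)

lemma Jsq_penalty_increment_ge:
  assumes J: "semi_inner G Jip" and G: "lin_subspace G" and g: "g \<in> G" and d: "d \<in> G"
    and c: "0 \<le> c" and mu: "Jsq Jip g \<noteq> 0 \<longrightarrow> mu\<^sup>2 \<le> c / (2 * Jsq Jip g)"
  shows "mu\<^sup>2 * Jsq Jip d / 2 - c \<le> mu\<^sup>2 * Jsq Jip (\<lambda>z. g z + d z) - mu\<^sup>2 * Jsq Jip g"
proof -
  have "mu\<^sup>2 * (Jsq Jip d / 2 - 2 * Jsq Jip g) \<le> mu\<^sup>2 * (Jsq Jip (\<lambda>z. g z + d z) - Jsq Jip g)"
    by (intro mult_left_mono Jsq_add_ge[OF J G g d]) simp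
  moreover have "2 * (mu\<^sup>2 * Jsq Jip g) \<le> c"
    using mu Jsq_nonneg[OF J g] c by (cases "Jsq Jip g = 0") (auto simp: field_simps)
  ultimately show ?thesis by (simp add: algebra_simps)
qed

section \<open>The \<open>\<ell>\<^sub>1\<close> penalty\<close>

lemma l1norm_scaleR: "0 \<le> t \<Longrightarrow> l1norm (t *\<^sub>R b) = t * l1norm b"
  unfolding l1norm_def by (simp add: abs_mult sum_distrib_left)

lemma l1norm_segment_convex:
  assumes "0 \<le> s" "s \<le> 1"
  shows "l1norm (b + s *\<^sub>R d) \<le> (1 - s) * l1norm b + s * l1norm (b + d)"
proof -
  have "\<bar>b $ j + s * d $ j\<bar> \<le> (1 - s) * \<bar>b $ j\<bar> + s * \<bar>b $ j + d $ j\<bar>" for j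
  proof -
    have "\<bar>b $ j + s * d $ j\<bar> = \<bar>(1 - s) * b $ j + s * (b $ j + d $ j)\<bar>" by (simp add: algebra_simps)
    also have "\<dots> \<le> \<bar>(1 - s) * b $ j\<bar> + \<bar>s * (b $ j + d $ j)\<bar>" by (rule abs_triangle_ineq)
    finally show ?thesis using assms by (simp add: abs_mult)
  qed
  then show ?thesis
    unfolding l1norm_def by (simp add: sum_distrib_left sum.distrib[symmetric] sum_mono)
qed

lemma two_mult_le_AM_GM:
  fixes a x L :: real
  assumes "0 < L"
  shows "2 * a * x \<le> 2 * a\<^sup>2 / L + L * x\<^sup>2 / 2"
proof -
  have "2 * a\<^sup>2 / L + L * x\<^sup>2 / 2 - 2 * a * x = (2 / L) * (a - L * x / 2)\<^sup>2"
    using assms by (simp add: field_simps power2_eq_square)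
  moreover have "0 \<le> (2 / L) * (a - L * x / 2)\<^sup>2" using assms by simp
  ultimately show ?thesis by linarith
qed

text \<open>The \<open>\<ell>\<^sub>1\<close> penalty can only decrease on the support of \<open>b\<close>; that loss is
  absorbed into the quadratic term at the price of the sparsity \<open>card {j. b$j \<noteq> 0}\<close>.\<close>

lemma l1norm_add_ge_support:
  fixes b d :: "real^'n"
  assumes lam: "0 \<le> lam" and L: "0 < L"
  shows "lam * l1norm d - 2 * lam\<^sup>2 * real (card {j. b $ j \<noteq> 0}) / L - L * (d \<bullet> d) / 2
    \<le> lam * l1norm (b + d) - lam * l1norm b"
proof -
  have coord: "lam * \<bar>d $ j\<bar> - (if b $ j \<noteq> 0 then 2 * lam\<^sup>2 / L else 0) - L * (d $ j)\<^sup>2 / 2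
      \<le> lam * \<bar>b $ j + d $ j\<bar> - lam * \<bar>b $ j\<bar>" for j
  proof (cases "b $ j = 0")
    case True then show ?thesis using L by simp
  next
    case False
    have "\<bar>b $ j\<bar> \<le> \<bar>d $ j\<bar> + \<bar>b $ j + d $ j\<bar>" by linarith
    from mult_left_mono[OF this lam]
    have "- (lam * \<bar>d $ j\<bar>) \<le> lam * \<bar>b $ j + d $ j\<bar> - lam * \<bar>b $ j\<bar>"
      by (simp add: distrib_left)
    moreover have "2 * lam * \<bar>d $ j\<bar> \<le> 2 * lam\<^sup>2 / L + L * \<bar>d $ j\<bar>\<^sup>2 / 2"
      by (rule two_mult_le_AM_GM[OF L])
    ultimately show ?thesis using False by simp
  qed
  have card: "(\<Sum>j\<in>UNIV. if b $ j \<noteq> 0 then 2 * lam\<^sup>2 / L else 0)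
      = 2 * lam\<^sup>2 * real (card {j. b $ j \<noteq> 0}) / L"
    using sum.inter_filter[of UNIV "\<lambda>j. 2 * lam\<^sup>2 / L" "\<lambda>j. b $ j \<noteq> 0", symmetric] by simp
  have inner: "(\<Sum>j\<in>UNIV. L * (d $ j)\<^sup>2 / 2) = L * (d \<bullet> d) / 2"
    unfolding inner_vec_def by (simp add: sum_distrib_left sum_divide_distrib power2_eq_square)
  have "(\<Sum>j\<in>UNIV. lam * \<bar>d $ j\<bar> - (if b $ j \<noteq> 0 then 2 * lam\<^sup>2 / L else 0) - L * (d $ j)\<^sup>2 / 2)
      \<le> (\<Sum>j\<in>UNIV. lam * \<bar>b $ j + d $ j\<bar> - lam * \<bar>b $ j\<bar>)"
    by (rule sum_mono) (rule coord)
  then show ?thesis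
    unfolding l1norm_def sum_subtractf card inner by (simp add: sum_distrib_left)
qed

section \<open>The doubly penalised criterion\<close>

lemma power2_diff_segment_convex:
  fixes r u s :: real
  assumes "0 \<le> s" "s \<le> 1"
  shows "(r - s * u)\<^sup>2 \<le> (1 - s) * r\<^sup>2 + s * (r - u)\<^sup>2"
proof -
  have "(1 - s) * r\<^sup>2 + s * (r - u)\<^sup>2 - (r - s * u)\<^sup>2 = s * (1 - s) * u\<^sup>2"
    by (simp add: power2_eq_square algebra_simps)
  moreover have "0 \<le> s * (1 - s) * u\<^sup>2" using assms by simp
  ultimately show ?thesis by linarith
qed

lemma crit_segment_convex:
  assumes J: "semi_inner G Jip" and G: "lin_subspace G" and lam: "0 \<le> lam"
    and g: "g \<in> G" and d: "d \<in> G" and s: "0 \<le> s" "s \<le> 1"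
  shows "crit n xs zs Y Jip lam mu (b + s *\<^sub>R db) (\<lambda>z. g z + s * d z)
    \<le> (1 - s) * crit n xs zs Y Jip lam mu b g + s * crit n xs zs Y Jip lam mu (b + db) (\<lambda>z. g z + d z)"
proof -
  define r where "r i = Y i - xs i \<bullet> b - g (zs i)" for i
  define u where "u i = xs i \<bullet> db + d (zs i)" for i
  have res: "Y i - xs i \<bullet> (b + t *\<^sub>R db) - (g (zs i) + t * d (zs i)) = r i - t * u i" for i t
    unfolding r_def u_def by (simp add: inner_add_right algebra_simps)
  have "(\<Sum>i<n. (r i - s * u i)\<^sup>2) \<le> (\<Sum>i<n. (1 - s) * (r i)\<^sup>2 + s * (r i - u i)\<^sup>2)"
    by (rule sum_mono) (rule power2_diff_segment_convex[OF s])
  then have "(\<Sum>i<n. (r i - s * u i)\<^sup>2) \<le> (1 - s) * (\<Sum>i<n. (r i)\<^sup>2) + s * (\<Sum>i<n. (r i - u i)\<^sup>2)"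
    by (simp add: sum.distrib sum_distrib_left)
  from divide_right_mono[OF this, of "real n"]
  have "(\<Sum>i<n. (r i - s * u i)\<^sup>2) / real n
      \<le> (1 - s) * ((\<Sum>i<n. (r i)\<^sup>2) / real n) + s * ((\<Sum>i<n. (r i - u i)\<^sup>2) / real n)"
    by (simp add: add_divide_distrib)
  moreover have "lam * l1norm (b + s *\<^sub>R db) \<le> (1 - s) * (lam * l1norm b) + s * (lam * l1norm (b + db))"
    using mult_left_mono[OF l1norm_segment_convex[OF s] lam] by (simp add: algebra_simps)
  moreover have "mu\<^sup>2 * Jsq Jip (\<lambda>z. g z + s * d z)
      \<le> (1 - s) * (mu\<^sup>2 * Jsq Jip g) + s * (mu\<^sup>2 * Jsq Jip (\<lambda>z. g z + d z))"
    using mult_left_mono[OF Jsq_segment_convex[OF J G g d s] zero_le_power2[of mu]]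
    by (simp add: algebra_simps)
  ultimately show ?thesis
    unfolding crit_def res using res[of _ 0] res[of _ 1] by (simp add: algebra_simps)
qed

lemma crit_at_truth_plus:
  "crit n xs zs (\<lambda>i. xs i \<bullet> \<beta>0 + g0 (zs i) + es i) Jip lam mu (\<beta>0 + D) (\<lambda>z. g0 z + Dg z)
    = (\<Sum>i<n. (es i)\<^sup>2) / real n - 2 * ((\<Sum>i<n. es i * (xs i \<bullet> D + Dg (zs i))) / real n)
      + emp_sq n xs zs D Dg + lam * l1norm (\<beta>0 + D) + mu\<^sup>2 * Jsq Jip (\<lambda>z. g0 z + Dg z)"
proof -
  have "(\<Sum>i<n. (xs i \<bullet> \<beta>0 + g0 (zs i) + es i - xs i \<bullet> (\<beta>0 + D) - (g0 (zs i) + Dg (zs i)))\<^sup>2)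
      = (\<Sum>i<n. (es i)\<^sup>2) - 2 * (\<Sum>i<n. es i * (xs i \<bullet> D + Dg (zs i))) + (\<Sum>i<n. (xs i \<bullet> D + Dg (zs i))\<^sup>2)"
    by (simp add: inner_add_right power2_eq_square algebra_simps sum.distrib sum_subtractf sum_distrib_left)
  then show ?thesis
    unfolding crit_def emp_sq_def by (simp add: diff_divide_distrib add_divide_distrib)
qed

text \<open>The criterion is convex, so it does not increase from the truth towards the minimiser;
  comparing it at the convex combination with its value at the truth gives the basic inequality.\<close>

lemma basic_inequality:
  assumes J: "semi_inner G Jip" and G: "lin_subspace G" and lam: "0 \<le> lam"
    and g0: "g0 \<in> G" and ghat: "ghat \<in> G" and t: "0 \<le> t" "t \<le> 1"
    and min: "crit n xs zs (\<lambda>i. xs i \<bullet> \<beta>0 + g0 (zs i) + es i) Jip lam mu \<beta>hat ghat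
      \<le> crit n xs zs (\<lambda>i. xs i \<bullet> \<beta>0 + g0 (zs i) + es i) Jip lam mu \<beta>0 g0"
  shows "emp_sq n xs zs (t *\<^sub>R (\<beta>hat - \<beta>0)) (\<lambda>z. t * (ghat z - g0 z))
      + lam * l1norm (\<beta>0 + t *\<^sub>R (\<beta>hat - \<beta>0)) + mu\<^sup>2 * Jsq Jip (\<lambda>z. g0 z + t * (ghat z - g0 z))
    \<le> 2 * ((\<Sum>i<n. es i * (xs i \<bullet> (t *\<^sub>R (\<beta>hat - \<beta>0)) + t * (ghat (zs i) - g0 (zs i)))) / real n)
      + lam * l1norm \<beta>0 + mu\<^sup>2 * Jsq Jip g0"
proof -
  let ?Y = "\<lambda>i. xs i \<bullet> \<beta>0 + g0 (zs i) + es i"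
  let ?crit = "crit n xs zs ?Y Jip lam mu"
  have "?crit (\<beta>0 + t *\<^sub>R (\<beta>hat - \<beta>0)) (\<lambda>z. g0 z + t * (ghat z - g0 z))
      \<le> (1 - t) * ?crit \<beta>0 g0 + t * ?crit (\<beta>0 + (\<beta>hat - \<beta>0)) (\<lambda>z. g0 z + (ghat z - g0 z))"
    by (rule crit_segment_convex[OF J G lam g0 lin_subspace_diff[OF G ghat g0] t])
  also have "\<dots> \<le> ?crit \<beta>0 g0"
    using mult_left_mono[OF min t(1)] by (simp add: algebra_simps)
  also have "?crit \<beta>0 g0 = (\<Sum>i<n. (es i)\<^sup>2) / real n + lam * l1norm \<beta>0 + mu\<^sup>2 * Jsq Jip g0"
    using crit_at_truth_plus[where D = 0 and Dg = "\<lambda>_. 0"] by (simp add: emp_sq_def)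
  finally show ?thesis
    unfolding crit_at_truth_plus[of n xs zs \<beta>0 g0 es Jip lam mu "t *\<^sub>R (\<beta>hat - \<beta>0)"] by simp
qed

section \<open>The deterministic estimate\<close>

lemma pop_sq_scaled: "pop_sq Q (t *\<^sub>R b) (\<lambda>z. t * g z) = t\<^sup>2 * pop_sq Q b g"
proof -
  have "(\<lambda>\<omega>. (fst \<omega> \<bullet> (t *\<^sub>R b) + t * g (snd \<omega>))\<^sup>2) = (\<lambda>\<omega>. t\<^sup>2 * (fst \<omega> \<bullet> b + g (snd \<omega>))\<^sup>2)"
    by (simp add: power2_eq_square algebra_simps)
  then show ?thesis unfolding pop_sq_def by simp
qed

lemma tau_scaled:
  assumes J: "semi_inner G Jip" and G: "lin_subspace G" and g: "g \<in> G" and t: "0 \<le> t"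
  shows "tau Q Jip lam mu R \<delta>0 (t *\<^sub>R b) (\<lambda>z. t * g z) = t * tau Q Jip lam mu R \<delta>0 b g"
proof -
  have "pop_sq Q (t *\<^sub>R b) (\<lambda>z. t * g z) + mu\<^sup>2 * Jsq Jip (\<lambda>z. t * g z)
      = t\<^sup>2 * (pop_sq Q b g + mu\<^sup>2 * Jsq Jip g)"
    unfolding pop_sq_scaled Jsq_scaled[OF J G g] by (simp add: algebra_simps)
  then have "sqrt (pop_sq Q (t *\<^sub>R b) (\<lambda>z. t * g z) + mu\<^sup>2 * Jsq Jip (\<lambda>z. t * g z))
      = t * sqrt (pop_sq Q b g + mu\<^sup>2 * Jsq Jip g)"
    using t by (simp add: real_sqrt_mult)
  then show ?thesis
    unfolding tau_def l1norm_scaleR[OF t] by (simp add: algebra_simps)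
qed

lemma tau_value_lt:
  fixes a b \<delta> R :: real
  assumes \<delta>: "0 < \<delta>" "\<delta> \<le> 1/253" and R: "0 < R" and a: "0 \<le> a" and b: "0 \<le> b"
    and bound: "a / 2 + b \<le> 9/2 * (\<delta> * R\<^sup>2)"
  shows "b / (R * sqrt (\<delta> / 2)) + sqrt a < R"
proof -
  define s where "s = sqrt (\<delta> / 2)"
  have s: "0 < s" "s\<^sup>2 = \<delta> / 2" "s \<le> sqrt \<delta>" using \<delta> unfolding s_def by auto
  have small: "sqrt \<delta> \<le> 1/15" using \<delta> by (intro real_le_lsqrt) (auto simp: power2_eq_square)
  have "9/2 * (\<delta> * R\<^sup>2) = 9 * s\<^sup>2 * R\<^sup>2" using s(2) by simp
  then have "b \<le> 9 * s\<^sup>2 * R\<^sup>2" using bound a by linarith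
  then have "b / (R * s) \<le> 9 * (s * R)"
    using R s(1) by (simp add: pos_divide_le_eq power2_eq_square algebra_simps)
  moreover have "s * R \<le> sqrt \<delta> * R" using s(3) R by simp
  moreover have "sqrt a \<le> 3 * (sqrt \<delta> * R)"
  proof (rule real_le_lsqrt)
    have "(3 * (sqrt \<delta> * R))\<^sup>2 = 9 * (\<delta> * R\<^sup>2)" using \<delta> by (simp add: power_mult_distrib)
    then show "a \<le> (3 * (sqrt \<delta> * R))\<^sup>2" using bound b by linarith
  qed (use R \<delta> in simp)
  moreover have "sqrt \<delta> * R \<le> R / 15" using small R by simp
  ultimately show ?thesis using R unfolding s_def by linarith
qed

text \<open>The empirical norm is traded for the population norm, which pays for the
  \<open>\<ell>\<^sub>1\<close> loss on the support of \<open>\<beta>\<^sup>0\<close> through \<open>min_eigenvalue (Sigma_til Q)\<close>.\<close>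

lemma tau_lt_of_basic_inequality:
  fixes Q :: "((real^'p) \<times> (real^'d)) measure"
  assumes Q: "finite_measure Q" "sets Q = sets borel"
    and GL2: "subspace_L2 Q G" and J: "semi_inner G Jip" and g0: "g0 \<in> G" and Dg: "Dg \<in> G"
    and \<delta>0: "0 < \<delta>0" "\<delta>0 \<le> 1/253" and lam: "0 < lam" and R: "0 < R"
    and C3_xtil: "\<forall>j. integrable Q (\<lambda>\<omega>. (xtil Q j \<omega>)\<^sup>2)"
    and C3_h: "\<forall>j. integrable Q (\<lambda>\<omega>. (hcomp Q j \<omega>)\<^sup>2)"
    and C3_min: "min_eigenvalue (Sigma_til Q) > 0"
    and mu_cond: "Jsq Jip g0 \<noteq> 0 \<longrightarrow> mu\<^sup>2 \<le> \<delta>0 * R\<^sup>2 / (2 * Jsq Jip g0)"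
    and lam_cond: "4 * lam\<^sup>2 * real (card {j. \<beta>0 $ j \<noteq> 0}) / min_eigenvalue (Sigma_til Q) \<le> \<delta>0 * R\<^sup>2"
    and emp: "\<bar>emp_sq n xs zs D Dg - pop_sq Q D Dg\<bar> \<le> \<delta>0 * R\<^sup>2"
    and noise: "\<bar>\<Sum>i<n. es i * (xs i \<bullet> D + Dg (zs i))\<bar> / real n \<le> \<delta>0 * R\<^sup>2"
    and basic: "emp_sq n xs zs D Dg + lam * l1norm (\<beta>0 + D) + mu\<^sup>2 * Jsq Jip (\<lambda>z. g0 z + Dg z)
      \<le> 2 * ((\<Sum>i<n. es i * (xs i \<bullet> D + Dg (zs i))) / real n) + lam * l1norm \<beta>0 + mu\<^sup>2 * Jsq Jip g0"
  shows "tau Q Jip lam mu R \<delta>0 D Dg < R"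
proof -
  define \<Lambda> where "\<Lambda> = min_eigenvalue (Sigma_til Q)"
  define s0 where "s0 = real (card {j. \<beta>0 $ j \<noteq> 0})"
  have G: "lin_subspace G" using GL2 unfolding subspace_L2_def by blast
  have "Dg \<in> borel_measurable borel" "integrable Q (\<lambda>\<omega>. (Dg (snd \<omega>))\<^sup>2)"
    using GL2 Dg unfolding subspace_L2_def by auto
  then have pop: "\<Lambda> * (D \<bullet> D) \<le> pop_sq Q D Dg"
    unfolding \<Lambda>_def using C3_xtil C3_h by (intro min_eigenvalue_Sigma_til_le_pop_sq[OF Q]) auto
  have l1: "lam * l1norm D - 2 * lam\<^sup>2 * s0 / \<Lambda> - \<Lambda> * (D \<bullet> D) / 2
      \<le> lam * l1norm (\<beta>0 + D) - lam * l1norm \<beta>0"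
    unfolding s0_def \<Lambda>_def by (rule l1norm_add_ge_support[OF less_imp_le[OF lam] C3_min])
  have pen: "mu\<^sup>2 * Jsq Jip Dg / 2 - \<delta>0 * R\<^sup>2 \<le> mu\<^sup>2 * Jsq Jip (\<lambda>z. g0 z + Dg z) - mu\<^sup>2 * Jsq Jip g0"
    using \<delta>0 by (intro Jsq_penalty_increment_ge[OF J G g0 Dg _ mu_cond]) simp
  have lam0: "2 * lam\<^sup>2 * s0 / \<Lambda> \<le> \<delta>0 * R\<^sup>2 / 2"
    using lam_cond unfolding s0_def \<Lambda>_def by simp
  have noise': "(\<Sum>i<n. es i * (xs i \<bullet> D + Dg (zs i))) / real n \<le> \<delta>0 * R\<^sup>2"
    using order_trans[OF divide_right_mono[OF abs_ge_self] noise] by simp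
  have bound: "(pop_sq Q D Dg + mu\<^sup>2 * Jsq Jip Dg) / 2 + lam * l1norm D \<le> 9/2 * (\<delta>0 * R\<^sup>2)"
  proof -
    have "lam * l1norm D - \<delta>0 * R\<^sup>2 / 2 - pop_sq Q D Dg / 2 \<le> lam * l1norm (\<beta>0 + D) - lam * l1norm \<beta>0"
      using l1 lam0 pop by linarith
    moreover have "pop_sq Q D Dg - \<delta>0 * R\<^sup>2 \<le> emp_sq n xs zs D Dg" using emp by linarith
    ultimately show ?thesis using basic noise' pen by argo
  qed
  have a: "0 \<le> pop_sq Q D Dg + mu\<^sup>2 * Jsq Jip Dg"
    using Jsq_nonneg[OF J Dg] unfolding pop_sq_def by simp
  have b: "0 \<le> lam * l1norm D" using lam unfolding l1norm_def by (simp add: sum_nonneg)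
  show ?thesis
    unfolding tau_def by (rule tau_value_lt[OF \<delta>0 R a b bound])
qed

theorem mainTheorem3:
  fixes Q :: "((real^'p) \<times> (real^'d)) measure"
    and G :: "(real^'d \<Rightarrow> real) set"
    and Jip :: "(real^'d \<Rightarrow> real) \<Rightarrow> (real^'d \<Rightarrow> real) \<Rightarrow> real"
    and \<beta>0 :: "real^'p" and g0 :: "real^'d \<Rightarrow> real"
    and n :: nat and xs :: "nat \<Rightarrow> real^'p" and zs :: "nat \<Rightarrow> real^'d" and es :: "nat \<Rightarrow> real"
    and \<delta>0 lam mu R :: real
    and \<beta>hat :: "real^'p" and ghat :: "real^'d \<Rightarrow> real"
  assumes Qprob: "prob_space Q" and Qsets: "sets Q = sets borel"
    and GL2: "subspace_L2 Q G" and Jsemi: "semi_inner G Jip"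
    and g0G: "g0 \<in> G"
    and npos: "n > 0"
    and d0: "0 < \<delta>0" "\<delta>0 \<le> 1/253"
    and pos: "lam > 0" "mu > 0" "R > 0"
    \<comment> \<open>Condition (C3): E[tilde x^T tilde x] and E[h^T h] finite, Lambda_{tilde X,min} > 0\<close>
    and C3_xtil: "\<forall>j. integrable Q (\<lambda>\<omega>. (xtil Q j \<omega>)\<^sup>2)"
    and C3_h: "\<forall>j. integrable Q (\<lambda>\<omega>. (hcomp Q j \<omega>)\<^sup>2)"
    and C3_min: "min_eigenvalue (Sigma_til Q) > 0"
    and mu_cond: "Jsq Jip g0 \<noteq> 0 \<longrightarrow> mu\<^sup>2 \<le> \<delta>0 * R\<^sup>2 / (2 * Jsq Jip g0)"
    and lam_cond: "4 * lam\<^sup>2 * real (card {j. \<beta>0 $ j \<noteq> 0}) / min_eigenvalue (Sigma_til Q) \<le> \<delta>0 * R\<^sup>2"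
    \<comment> \<open>the event T(delta0,R)\<close>
    and T1: "\<forall>b. \<forall>g\<in>G. tau Q Jip lam mu R \<delta>0 b g \<le> R \<longrightarrow>
               \<bar>emp_sq n xs zs b g - pop_sq Q b g\<bar> \<le> \<delta>0 * R\<^sup>2"
    and T2: "\<forall>b. \<forall>g\<in>G. tau Q Jip lam mu R \<delta>0 b g \<le> R \<longrightarrow>
               \<bar>(\<Sum>i<n. es i * (xs i \<bullet> b + g (zs i)))\<bar> / real n \<le> \<delta>0 * R\<^sup>2"
    \<comment> \<open>(beta hat, g hat) minimises the criterion over R^p x G, with Y = X beta0 + g0(Z) + E\<close>
    and ghatG: "ghat \<in> G"
    and minimiser: "\<forall>b. \<forall>g\<in>G.
        crit n xs zs (\<lambda>i. xs i \<bullet> \<beta>0 + g0 (zs i) + es i) Jip lam mu \<beta>hat ghat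
        \<le> crit n xs zs (\<lambda>i. xs i \<bullet> \<beta>0 + g0 (zs i) + es i) Jip lam mu b g"
  shows "tau Q Jip lam mu R \<delta>0 (\<beta>hat - \<beta>0) (\<lambda>z. ghat z - g0 z) \<le> R"
proof (rule ccontr)
  define T where "T = tau Q Jip lam mu R \<delta>0 (\<beta>hat - \<beta>0) (\<lambda>z. ghat z - g0 z)"
  define t where "t = R / T"
  assume "\<not> ?thesis"
  then have "R < T" unfolding T_def by simp
  then have t: "0 < t" "t < 1" "t * T = R" unfolding t_def using pos(3) by auto
  have G: "lin_subspace G" using GL2 unfolding subspace_L2_def by blast
  have diff: "(\<lambda>z. ghat z - g0 z) \<in> G" by (rule lin_subspace_diff[OF G ghatG g0G])
  define D where "D = t *\<^sub>R (\<beta>hat - \<beta>0)"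
  define Dg where "Dg = (\<lambda>z. t * (ghat z - g0 z))"
  have DgG: "Dg \<in> G" unfolding Dg_def by (rule lin_subspace_scaled[OF G diff])
  have tau_D: "tau Q Jip lam mu R \<delta>0 D Dg = R"
    unfolding D_def Dg_def tau_scaled[OF Jsemi G diff less_imp_le[OF t(1)]] T_def[symmetric] by (rule t(3))
  have "tau Q Jip lam mu R \<delta>0 D Dg < R"
  proof (rule tau_lt_of_basic_inequality[OF _ Qsets GL2 Jsemi g0G DgG d0 pos(1,3) C3_xtil C3_h C3_min
        mu_cond lam_cond])
    show "finite_measure Q" using Qprob by (simp add: prob_space_def)
    show "\<bar>emp_sq n xs zs D Dg - pop_sq Q D Dg\<bar> \<le> \<delta>0 * R\<^sup>2" using T1 DgG tau_D by simp
    show "\<bar>\<Sum>i<n. es i * (xs i \<bullet> D + Dg (zs i))\<bar> / real n \<le> \<delta>0 * R\<^sup>2" using T2 DgG tau_D by simp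
    show "emp_sq n xs zs D Dg + lam * l1norm (\<beta>0 + D) + mu\<^sup>2 * Jsq Jip (\<lambda>z. g0 z + Dg z)
      \<le> 2 * ((\<Sum>i<n. es i * (xs i \<bullet> D + Dg (zs i))) / real n) + lam * l1norm \<beta>0 + mu\<^sup>2 * Jsq Jip g0"
      unfolding D_def Dg_def using minimiser g0G pos(1) t
      by (intro basic_inequality[OF Jsemi G _ g0G ghatG]) auto
  qed
  then show False using tau_D by simp
qed

end
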